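(* Let $f:\mathbb{R}^n\to\mathbb{R}$, $g:\mathbb{R}^m\to\mathbb{R}$, $Q:\mathbb{R}^n\times\mathbb{R}^m\to\mathbb{R}\cup\{+\infty\}$ and $L(x,y)=f(x)+Q(x,y)+g(y)$ satisfy: (A1) $L$ is bounded below; $f,g$ are continuously differentiable with $\nabla f$, $\nabla g$ Lipschitz continuous with constants $L_{\nabla f}$, $L_{\nabla g}$; $Q$ is proper and lower semicontinuous; $\phi_1:\mathbb{R}^n\to\mathbb{R}$, $\phi_2:\mathbb{R}^m\to\mathbb{R}$ are differentiable, $\phi_i$ is $\theta_i$-strongly convex with $\theta_1>L_{\nabla f}$, $\theta_2>L_{\nabla g}$, and $\nabla\phi_i$ is $\eta_i$-Lipschitz continuous ($i=1,2$); (A2) $L$ is coercive and $\mathrm{dom}\,Q$ is closed; for all $(x,y)\in\mathrm{dom}\,Q$, $\partial_xQ(x,y)\times\partial_yQ(x,y)\subset\partial Q(x,y)$; and $Q(x,y)=q(x,y)+h(x)$, where $h:\mathbb{R}^n\to\mathbb{R}\cup\{+\infty\}$ is continuous on its domain, $q$ is continuous on $\mathrm{dom}\,Q$, for every $y$ the partial function $q(\cdot,y)$ is continuously differentiable, and for each bounded subset $D_1\times D_2\subset\mathrm{dom}\,Q$ there exists $\xi>0$ such that $\|\nabla_xq(\bar x,y)-\nabla_xq(\bar x,\bar y)\|\le\xi\|y-\bar y\|$ for all $\bar x\in D_1$, $y,\bar y\in D_2$. Let $z_k=(x_k,y_k)$, together with $(\hat x_k,\hat y_k)$, be generated by the following algorithm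 with initial point $z_0=(x_0,y_0)$: set $(\hat x_0,\hat y_0)=(x_0,y_0)$, choose $\alpha_{\max},\beta_{\max}\ge0$ with $\alpha_{\max}+\beta_{\max}<1$ and $\alpha_k\in[0,\alpha_{\max}]$, $\beta_k\in[0,\beta_{\max}]$; for $k=0,1,\dots$: 1. $x_{k+1}\in\arg\min_{x}\{Q(x,\hat y_k)+\langle\nabla f(\hat x_k),x\rangle+D_{\phi_1}(x,\hat x_k)\}$, $y_{k+1}\in\arg\min_{y}\{Q(x_{k+1},y)+\langle\nabla g(\hat y_k),y\rangle+D_{\phi_2}(y,\hat y_k)\}$; 2. $u_{k+1}=x_{k+1}+\alpha_k(x_{k+1}-x_k)+\beta_k(x_k-x_{k-1})$, $v_{k+1}=y_{k+1}+\alpha_k(y_{k+1}-y_k)+\beta_k(y_k-y_{k-1})$; 3. if $L(u_{k+1},v_{k+1})\le L(x_{k+1},y_{k+1})$ then $(\hat x_{k+1},\hat y_{k+1})=(u_{k+1},v_{k+1})$, else $(\hat x_{k+1},\hat y_{k+1})=(x_{k+1},y_{k+1})$. Let $\mathcal{L}(z_0)$ be the set of cluster points of $\{z_k\}$, i.e. the set of $\hat z\in\mathbb{R}^n\times\mathbb{R}^m$ for which there is a strictly increasing sequence $\{k_j\}$ with $z_{k_j}\to\hat z$. Then: (i) $\mathcal{L}(z_0)$ is a nonempty compact set, and $L$ is finite and constant on $\mathcal{L}(z_0)$; (ii) $\mathcal{L}(z_0)\subset\mathrm{crit}\,L$; (iii) $\lim_{k\to\infty}\mathrm{dist}(z_k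,\mathcal{L}(z_0))=0$.
   Context: For a convex differentiable $\phi$, $D_\phi(x,y)=\phi(x)-\phi(y)-\langle\nabla\phi(y),x-y\rangle$ (Bregman distance). $\phi$ is $\theta$-strongly convex if $\phi-\frac\theta2\|\cdot\|^2$ is convex. For a proper lsc $F$, the Fréchet subdifferential $\hat\partial F(x)$ is the set of $v$ with $\liminf_{y\to x}\frac{F(y)-F(x)-\langle v,y-x\rangle}{\|y-x\|}\ge0$ (empty if $x\notin\mathrm{dom}F$), and the (limiting) subdifferential is $\partial F(x)=\{v:\exists x_k\to x, F(x_k)\to F(x), v_k\in\hat\partial F(x_k), v_k\to v\}$. $\partial_xQ$, $\partial_yQ$ are the limiting subdifferentials of the partial functions. $\mathrm{crit}\,L=\{z: 0\in\partial L(z)\}$ is the set of critical points. $(x_{-1},y_{-1})$ in step 2 is a given initial point (e.g. $(x_0,y_0)$). *)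

theory Defs
  imports "HOL-Analysis.Analysis"
begin

definition edom :: "('v \<Rightarrow> ereal) \<Rightarrow> 'v set" where
  "edom F = {x. F x < \<infinity>}"

definition proper_fun :: "('v \<Rightarrow> ereal) \<Rightarrow> bool" where
  "proper_fun F \<longleftrightarrow> (\<forall>x. F x \<noteq> -\<infinity>) \<and> (\<exists>x. F x < \<infinity>)"

definition lsc_fun :: "('v::topological_space \<Rightarrow> ereal) \<Rightarrow> bool" where
  "lsc_fun F \<longleftrightarrow> (\<forall>x. F x \<le> Liminf (at x) F)"

definition bregman :: "('v::real_inner \<Rightarrow> real) \<Rightarrow> ('v \<Rightarrow> 'v) \<Rightarrow> 'v \<Rightarrow> 'v \<Rightarrow> real" where
  "bregman phi dphi x y = phi x - phi y - inner (dphi y) (x - y)"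

definition strongly_convex :: "real \<Rightarrow> ('v::real_normed_vector \<Rightarrow> real) \<Rightarrow> bool" where
  "strongly_convex theta phi \<longleftrightarrow> convex_on UNIV (\<lambda>x. phi x - theta / 2 * (norm x)\<^sup>2)"

text \<open>Frechet subdifferential: v such that
  liminf_{y -> x} (F y - F x - <v, y - x>) / norm (y - x) >= 0 (written out with epsilon-delta),
  empty outside the domain.\<close>
definition frechet_subdiff :: "('v::real_inner \<Rightarrow> ereal) \<Rightarrow> 'v \<Rightarrow> 'v set" where
  "frechet_subdiff F x =
     (if F x \<in> {-\<infinity>, \<infinity>} then {} else
      {v. \<forall>e>0. \<exists>d>0. \<forall>y. 0 < norm (y - x) \<and> norm (y - x) < d \<longrightarrow>
            F y \<ge> F x + ereal (inner v (y - x) - e * norm (y - x))})"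

definition lim_subdiff :: "('v::real_inner \<Rightarrow> ereal) \<Rightarrow> 'v \<Rightarrow> 'v set" where
  "lim_subdiff F x =
     {v. \<exists>xs vs. xs \<longlonglongrightarrow> x \<and> (\<lambda>k. F (xs k)) \<longlonglongrightarrow> F x \<and>
            (\<forall>k. vs k \<in> frechet_subdiff F (xs k)) \<and> vs \<longlonglongrightarrow> v}"

definition crit :: "('v::real_inner \<Rightarrow> ereal) \<Rightarrow> 'v set" where
  "crit F = {z. 0 \<in> lim_subdiff F z}"

definition cluster_points :: "(nat \<Rightarrow> 'v::topological_space) \<Rightarrow> 'v set" where
  "cluster_points z = {zh. \<exists>r. strict_mono r \<and> (z \<circ> r) \<longlonglongrightarrow> zh}"

end

theory Submission
  imports Defs
begin

text \<open>Combining the descent lemma for \<open>f\<close>, \<open>g\<close> with the strong convexity of the Bregman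
  kernels, each proximal step lowers \<open>L\<close> by at least a fixed multiple of
  \<open>norm (z (k+1) - zh k)\<^sup>2\<close>, and the safeguard of the extrapolation step gives
  \<open>L (zh k) \<le> L (z k)\<close>. As \<open>L\<close> is bounded below, the values \<open>L (z k)\<close> converge and
  \<open>z (k+1) - zh k \<rightarrow> 0\<close>. Coercivity makes the iterates bounded, and the cluster points of a
  bounded sequence form a nonempty compact set which the sequence approaches. Continuity of \<open>Q\<close>
  on its closed domain shows that \<open>L\<close> equals \<open>lim L (z k)\<close> at every cluster point and lets the
  minimality inequalities of both proximal steps pass to the limit along a subsequence, so
  \<open>-grad f\<close> and \<open>-grad g\<close> are partial Frechet subgradients of \<open>Q\<close> there; the
  partial-subdifferential hypothesis of (A2) and the smoothness of \<open>f + g\<close> then give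
  \<open>0 \<in> \<partial>L\<close>.\<close>

lemma has_real_derivative_along_line:
  assumes "\<And>u. (f has_derivative (\<lambda>d. inner (df u) d)) (at u)"
  shows "((\<lambda>t. f (b + t *\<^sub>R d)) has_real_derivative inner (df (b + t *\<^sub>R d)) d) (at t)"
proof -
  have "((\<lambda>t. b + t *\<^sub>R d) has_derivative (\<lambda>s. s *\<^sub>R d)) (at t)"
    by (auto intro!: derivative_eq_intros)
  from has_derivative_compose[OF this assms]
  have "((\<lambda>t. f (b + t *\<^sub>R d)) has_derivative (\<lambda>s. inner (df (b + t *\<^sub>R d)) (s *\<^sub>R d))) (at t)" .
  moreover have "(\<lambda>s. inner (df (b + t *\<^sub>R d)) (s *\<^sub>R d)) = (*) (inner (df (b + t *\<^sub>R d)) d)"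
    by (auto simp: fun_eq_iff)
  ultimately show ?thesis
    by (simp add: has_field_derivative_def)
qed

lemma descent_lemma:
  fixes f :: "'a::real_inner \<Rightarrow> real"
  assumes f_grad: "\<And>u. (f has_derivative (\<lambda>d. inner (df u) d)) (at u)"
    and df_lip: "lipschitz_on C UNIV df"
  shows "f a \<le> f b + inner (df b) (a - b) + C / 2 * (norm (a - b))\<^sup>2"
proof -
  define d where "d = a - b"
  define \<psi> where "\<psi> t = f (b + t *\<^sub>R d) - t * inner (df b) d - C / 2 * t\<^sup>2 * (norm d)\<^sup>2" for t
  define \<psi>' where "\<psi>' t = inner (df (b + t *\<^sub>R d)) d - inner (df b) d - C * t * (norm d)\<^sup>2" for t
  have der: "DERIV \<psi> t :> \<psi>' t" for t
    unfolding \<psi>_def \<psi>'_def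
    by (auto intro!: derivative_eq_intros has_real_derivative_along_line[OF f_grad])
  obtain t where t: "0 < t" "t < 1" "\<psi> 1 - \<psi> 0 = \<psi>' t"
    using MVT2[of 0 1 \<psi> \<psi>'] der by auto
  have "inner (df (b + t *\<^sub>R d)) d - inner (df b) d \<le> norm (df (b + t *\<^sub>R d) - df b) * norm d"
    by (metis inner_diff_left norm_cauchy_schwarz)
  also have "\<dots> \<le> C * norm (t *\<^sub>R d) * norm d"
    using lipschitz_on_normD[OF df_lip, of "b + t *\<^sub>R d" b] by (simp add: mult_right_mono)
  also have "\<dots> = C * t * (norm d)\<^sup>2"
    using t by (simp add: power2_eq_square)
  finally have "\<psi>' t \<le> 0"
    unfolding \<psi>'_def by simp
  with t have "\<psi> 1 \<le> \<psi> 0" by simp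
  then show ?thesis
    unfolding \<psi>_def d_def by simp
qed

lemma bregman_ge_strongly_convex:
  fixes phi :: "'a::real_inner \<Rightarrow> real"
  assumes phi_sc: "strongly_convex theta phi"
    and phi_grad: "\<And>u. (phi has_derivative (\<lambda>d. inner (dphi u) d)) (at u)"
  shows "theta / 2 * (norm (a - b))\<^sup>2 \<le> bregman phi dphi a b"
proof -
  define d where "d = a - b"
  define \<gamma> where "\<gamma> t = phi (b + t *\<^sub>R d) - theta / 2 * (norm (b + t *\<^sub>R d))\<^sup>2" for t
  have cvx: "convex_on UNIV (\<lambda>x. phi x - theta / 2 * (norm x)\<^sup>2)"
    using phi_sc by (simp add: strongly_convex_def)
  have "convex_on UNIV \<gamma>"
  proof (rule convex_onI)
    fix t u v :: real assume t: "0 < t" "t < 1"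
    have "b + ((1 - t) * u + t * v) *\<^sub>R d = (1 - t) *\<^sub>R (b + u *\<^sub>R d) + t *\<^sub>R (b + v *\<^sub>R d)"
      by (simp add: algebra_simps)
    then show "\<gamma> ((1 - t) *\<^sub>R u + t *\<^sub>R v) \<le> (1 - t) * \<gamma> u + t * \<gamma> v"
      unfolding \<gamma>_def using convex_onD[OF cvx, of t "b + u *\<^sub>R d" "b + v *\<^sub>R d"] t
      by (simp add: algebra_simps)
  qed simp
  have norm_line: "(norm (b + t *\<^sub>R d))\<^sup>2 = (norm b)\<^sup>2 + 2 * t * inner b d + t\<^sup>2 * (norm d)\<^sup>2" for t
    unfolding power2_norm_eq_inner
    by (simp add: inner_add_left inner_add_right inner_commute algebra_simps power2_eq_square)
  have "DERIV \<gamma> 0 :> inner (dphi b) d - theta * inner b d"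
    using has_real_derivative_along_line[OF phi_grad, of b d 0] unfolding \<gamma>_def norm_line
    by (auto intro!: derivative_eq_intros)
  with \<open>convex_on UNIV \<gamma>\<close> have "(inner (dphi b) d - theta * inner b d) * (1 - 0) \<le> \<gamma> 1 - \<gamma> 0"
    by (intro convex_on_imp_above_tangent) auto
  then show ?thesis
    unfolding \<gamma>_def bregman_def using norm_line[of 1]
    by (simp add: d_def algebra_simps power2_norm_eq_inner inner_diff_left inner_diff_right)
qed

lemma bregman_prox_grad_decrease:
  fixes f F :: "'a::real_inner \<Rightarrow> real"
  assumes f_grad: "\<And>u. (f has_derivative (\<lambda>d. inner (df u) d)) (at u)"
    and df_lip: "lipschitz_on Lf UNIV df"
    and phi_grad: "\<And>u. (phi has_derivative (\<lambda>d. inner (dphi u) d)) (at u)"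
    and phi_sc: "strongly_convex theta phi"
    and step: "F p + inner (df b) p + bregman phi dphi p b \<le> F b + inner (df b) b"
  shows "f p + F p + (theta - Lf) / 2 * (norm (p - b))\<^sup>2 \<le> f b + F b"
proof -
  have "f p \<le> f b + inner (df b) (p - b) + Lf / 2 * (norm (p - b))\<^sup>2"
    by (rule descent_lemma[OF f_grad df_lip])
  moreover have "theta / 2 * (norm (p - b))\<^sup>2 \<le> bregman phi dphi p b"
    by (rule bregman_ge_strongly_convex[OF phi_sc phi_grad])
  ultimately show ?thesis
    using step by (simp add: inner_diff_right left_diff_distrib diff_divide_distrib)
qed

lemma tendsto_bregman:
  assumes "continuous_on UNIV phi" "continuous_on UNIV dphi"
    and "(a \<longlongrightarrow> a0) F" "(b \<longlongrightarrow> b0) F"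
  shows "((\<lambda>j. bregman phi dphi (a j) (b j)) \<longlongrightarrow> bregman phi dphi a0 b0) F"
proof -
  have "((\<lambda>j. phi (a j)) \<longlongrightarrow> phi a0) F" "((\<lambda>j. phi (b j)) \<longlongrightarrow> phi b0) F"
    "((\<lambda>j. dphi (b j)) \<longlongrightarrow> dphi b0) F"
    using continuous_on_tendsto_compose[where s=UNIV] assms by auto
  then show ?thesis
    unfolding bregman_def by (intro tendsto_diff tendsto_inner assms)
qed

lemma bregman_step_limit:
  assumes step: "\<And>j. Fa j + inner (d (b j)) (a j) + bregman phi dphi (a j) (b j)
                      \<le> Fs j + inner (d (b j)) s + bregman phi dphi s (b j)"
    and lim: "Fa \<longlonglongrightarrow> A" "Fs \<longlonglongrightarrow> S" "a \<longlonglongrightarrow> p" "b \<longlonglongrightarrow> p"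
    and cont: "continuous_on UNIV phi" "continuous_on UNIV dphi" "continuous_on UNIV d"
  shows "A + inner (d p) p \<le> S + inner (d p) s + bregman phi dphi s p"
proof -
  have db: "(\<lambda>j. d (b j)) \<longlonglongrightarrow> d p"
    using continuous_on_tendsto_compose[OF cont(3) lim(4)] by simp
  have "(\<lambda>j. Fa j + inner (d (b j)) (a j) + bregman phi dphi (a j) (b j))
      \<longlonglongrightarrow> A + inner (d p) p + bregman phi dphi p p"
    using lim(1) tendsto_inner[OF db lim(3)] tendsto_bregman[OF cont(1,2) lim(3,4)]
    by (rule tendsto_add[OF tendsto_add])
  moreover have "(\<lambda>j. Fs j + inner (d (b j)) s + bregman phi dphi s (b j))
      \<longlonglongrightarrow> S + inner (d p) s + bregman phi dphi s p"
    using lim(2) tendsto_inner[OF db tendsto_const] tendsto_bregman[OF cont(1,2) tendsto_const lim(4)]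
    by (rule tendsto_add[OF tendsto_add])
  ultimately have "A + inner (d p) p + bregman phi dphi p p \<le> S + inner (d p) s + bregman phi dphi s p"
    by (rule LIMSEQ_le) (use step in blast)
  then show ?thesis
    by (simp add: bregman_def)
qed

text \<open>The Bregman term is \<open>o(norm (u - p))\<close> near \<open>p\<close>, so it does not contribute to the
  Frechet subdifferential at a minimiser.\<close>
lemma frechet_subdiff_of_bregman_min:
  fixes F :: "'v::real_inner \<Rightarrow> ereal"
  assumes phi_grad: "\<And>u. (phi has_derivative (\<lambda>d. inner (dphi u) d)) (at u)"
    and fin: "\<bar>F p\<bar> \<noteq> \<infinity>"
    and not_minf: "\<And>u. F u \<noteq> -\<infinity>"
    and min: "\<And>u. F u \<noteq> \<infinity> \<Longrightarrow>
       real_of_ereal (F p) + inner c p \<le> real_of_ereal (F u) + inner c u + bregman phi dphi u p"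
  shows "-c \<in> frechet_subdiff F p"
proof -
  have "\<exists>d>0. \<forall>y. 0 < norm (y - p) \<and> norm (y - p) < d \<longrightarrow>
            F y \<ge> F p + ereal (inner (-c) (y - p) - e * norm (y - p))" if e: "e > 0" for e
  proof -
    from phi_grad[of p, unfolded has_derivative_within_alt] e obtain d where d: "d > 0"
      "\<And>y. norm (y - p) < d \<Longrightarrow> norm (phi y - phi p - inner (dphi p) (y - p)) \<le> e * norm (y - p)"
      by blast
    show ?thesis
    proof (intro exI[of _ d] conjI allI impI)
      fix y assume y: "0 < norm (y - p) \<and> norm (y - p) < d"
      show "F y \<ge> F p + ereal (inner (-c) (y - p) - e * norm (y - p))"
      proof (cases "F y = \<infinity>")
        case True then show ?thesis by simp
      next
        case False
        then obtain r where r: "F y = ereal r" using not_minf[of y] by (cases "F y") auto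
        obtain s where s: "F p = ereal s" using fin by (cases "F p") auto
        have b: "bregman phi dphi y p \<le> e * norm (y - p)"
          using d(2)[of y] y unfolding bregman_def by simp
        have "s + inner c p \<le> r + inner c y + bregman phi dphi y p"
          using min[of y] False r s by simp
        with b have "s + (inner (-c) (y - p) - e * norm (y - p)) \<le> r"
          by (simp add: inner_diff_right)
        then show ?thesis using r s by simp
      qed
    qed (use d in auto)
  qed
  then show ?thesis using fin unfolding frechet_subdiff_def by auto
qed

lemma frechet_subdiff_add_differentiable:
  fixes Q G :: "'v::real_inner \<Rightarrow> ereal"
  assumes Fd: "(F has_derivative (\<lambda>d. inner (dF p) d)) (at p)"
    and G: "\<And>z. G z = Q z + ereal (F z)"
    and w: "w \<in> frechet_subdiff Q p"
  shows "w + dF p \<in> frechet_subdiff G p"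
proof -
  have fin: "\<bar>Q p\<bar> \<noteq> \<infinity>" using w unfolding frechet_subdiff_def by (auto split: if_splits)
  then obtain s where s: "Q p = ereal s" by (cases "Q p") auto
  have wD: "\<forall>e>0. \<exists>d>0. \<forall>y. 0 < norm (y - p) \<and> norm (y - p) < d \<longrightarrow>
            Q y \<ge> Q p + ereal (inner w (y - p) - e * norm (y - p))"
    using w fin unfolding frechet_subdiff_def by (auto split: if_splits)
  have "\<exists>d>0. \<forall>y. 0 < norm (y - p) \<and> norm (y - p) < d \<longrightarrow>
            G y \<ge> G p + ereal (inner (w + dF p) (y - p) - e * norm (y - p))" if e: "e > 0" for e
  proof -
    from Fd[unfolded has_derivative_within_alt] e obtain d1 where d1: "d1 > 0"
      "\<And>y. norm (y - p) < d1 \<Longrightarrow> norm (F y - F p - inner (dF p) (y - p)) \<le> e / 2 * norm (y - p)"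
      by (metis half_gt_zero UNIV_I)
    from wD e obtain d2 where d2: "d2 > 0" "\<And>y. 0 < norm (y - p) \<and> norm (y - p) < d2 \<Longrightarrow>
            Q y \<ge> Q p + ereal (inner w (y - p) - e / 2 * norm (y - p))"
      by (metis half_gt_zero)
    show ?thesis
    proof (intro exI[of _ "min d1 d2"] conjI allI impI)
      fix y assume y: "0 < norm (y - p) \<and> norm (y - p) < min d1 d2"
      have q: "Q y \<ge> ereal (s + inner w (y - p) - e / 2 * norm (y - p))"
        using d2(2)[of y] y s by (simp add: algebra_simps)
      have "\<bar>F y - F p - inner (dF p) (y - p)\<bar> \<le> e / 2 * norm (y - p)"
        using d1(2)[of y] y by simp
      from abs_le_D2[OF this]
      have fl: "F y \<ge> F p + inner (dF p) (y - p) - e / 2 * norm (y - p)" by linarith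
      have "G p + ereal (inner (w + dF p) (y - p) - e * norm (y - p))
          = ereal (s + inner w (y - p) - e / 2 * norm (y - p)) + ereal (F p + inner (dF p) (y - p) - e / 2 * norm (y - p))"
        using G s by (simp add: inner_add_left algebra_simps)
      also have "\<dots> \<le> Q y + ereal (F y)"
        using q fl by (intro add_mono) auto
      finally show "G y \<ge> G p + ereal (inner (w + dF p) (y - p) - e * norm (y - p))"
        using G by simp
    qed (use d1 d2 in auto)
  qed
  moreover have "\<bar>G p\<bar> \<noteq> \<infinity>" using G s by simp
  ultimately show ?thesis unfolding frechet_subdiff_def by auto
qed

lemma lim_subdiff_add_C1:
  fixes Q G :: "'v::real_inner \<Rightarrow> ereal"
  assumes Fd: "\<And>z. (F has_derivative (\<lambda>d. inner (dF z) d)) (at z)"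
    and dFc: "continuous_on UNIV dF"
    and G: "\<And>z. G z = Q z + ereal (F z)"
    and fin: "\<bar>Q p\<bar> \<noteq> \<infinity>"
    and v: "v \<in> lim_subdiff Q p"
  shows "v + dF p \<in> lim_subdiff G p"
proof -
  obtain xs vs where xs: "xs \<longlonglongrightarrow> p" "(\<lambda>k. Q (xs k)) \<longlonglongrightarrow> Q p"
    "\<And>k. vs k \<in> frechet_subdiff Q (xs k)" "vs \<longlonglongrightarrow> v"
    using v unfolding lim_subdiff_def by blast
  have Fc: "continuous_on UNIV F"
    by (rule has_derivative_continuous_on, rule Fd)
  have "(\<lambda>k. F (xs k)) \<longlonglongrightarrow> F p"
    using continuous_on_tendsto_compose[OF Fc xs(1)] by simp
  then have "(\<lambda>k. ereal (F (xs k))) \<longlonglongrightarrow> ereal (F p)" by simp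
  from tendsto_add_ereal[OF fin _ xs(2) this]
  have "(\<lambda>k. G (xs k)) \<longlonglongrightarrow> G p" using G by simp
  moreover have "(\<lambda>k. dF (xs k)) \<longlonglongrightarrow> dF p"
    using continuous_on_tendsto_compose[OF dFc xs(1)] by simp
  then have "(\<lambda>k. vs k + dF (xs k)) \<longlonglongrightarrow> v + dF p"
    using xs(4) by (intro tendsto_add) auto
  moreover have "vs k + dF (xs k) \<in> frechet_subdiff G (xs k)" for k
    by (rule frechet_subdiff_add_differentiable) (rule Fd, rule G, rule xs(3))
  ultimately show ?thesis unfolding lim_subdiff_def using xs(1)
    by (intro CollectI exI[of _ xs] exI[of _ "\<lambda>k. vs k + dF (xs k)"]) auto
qed

lemma frechet_subdiff_subset_lim_subdiff: "frechet_subdiff F p \<subseteq> lim_subdiff F p"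
proof
  fix v assume "v \<in> frechet_subdiff F p"
  then show "v \<in> lim_subdiff F p"
    unfolding lim_subdiff_def by (intro CollectI exI[of _ "\<lambda>k. p"] exI[of _ "\<lambda>k. v"]) auto
qed

lemma has_derivative_separable_sum:
  assumes "\<And>u. (f has_derivative (\<lambda>d. inner (df u) d)) (at u)"
    and "\<And>v. (g has_derivative (\<lambda>d. inner (dg v) d)) (at v)"
  shows "((\<lambda>p. f (fst p) + g (snd p)) has_derivative (\<lambda>d. inner (df (fst p), dg (snd p)) d)) (at p)"
proof -
  have "((\<lambda>p. f (fst p) + g (snd p)) has_derivative
          (\<lambda>d. inner (df (fst p)) (fst d) + inner (dg (snd p)) (snd d))) (at p)"
    using has_derivative_compose[OF has_derivative_fst[OF has_derivative_ident] assms(1)]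
      has_derivative_compose[OF has_derivative_snd[OF has_derivative_ident] assms(2)]
    by (rule has_derivative_add)
  then show ?thesis
    by (simp add: inner_prod_def)
qed

lemma descent_sequence_convergence:
  fixes w :: "nat \<Rightarrow> real" and e :: "nat \<Rightarrow> 'v::real_normed_vector"
  assumes a: "a > 0"
    and descent: "\<And>k. w (Suc k) + a * (norm (e k))\<^sup>2 \<le> w k"
    and bdd: "\<And>k. c \<le> w k"
  shows "decseq w" and "convergent w" and "e \<longlonglongrightarrow> 0"
proof -
  have gap: "a * (norm (e k))\<^sup>2 \<le> w k - w (Suc k)" for k
    using descent[of k] by simp
  show "decseq w"
  proof (rule decseq_SucI)
    fix k
    have "0 \<le> a * (norm (e k))\<^sup>2"
      using a by simp
    with gap[of k] show "w (Suc k) \<le> w k"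
      by linarith
  qed
  then obtain l where l: "w \<longlonglongrightarrow> l"
    using decseq_convergent bdd by blast
  then show "convergent w"
    by (auto simp: convergent_def)
  have gap_lim: "(\<lambda>k. (w k - w (Suc k)) / a) \<longlonglongrightarrow> 0"
    using tendsto_divide[OF tendsto_diff[OF l LIMSEQ_Suc[OF l]] tendsto_const, of a] a by simp
  have "(\<lambda>k. (norm (e k))\<^sup>2) \<longlonglongrightarrow> 0"
  proof (rule tendsto_sandwich[where f="\<lambda>k. 0" and h="\<lambda>k. (w k - w (Suc k)) / a"])
    show "\<forall>\<^sub>F k in sequentially. (norm (e k))\<^sup>2 \<le> (w k - w (Suc k)) / a"
      using gap a by (simp add: field_simps)
  qed (use gap_lim in auto)
  then have "(\<lambda>k. sqrt ((norm (e k))\<^sup>2)) \<longlonglongrightarrow> sqrt 0"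
    by (rule tendsto_real_sqrt)
  then show "e \<longlonglongrightarrow> 0"
    by (simp add: tendsto_norm_zero_iff)
qed

lemma bounded_sublevel_if_coercive:
  fixes L :: "'v::real_normed_vector \<Rightarrow> ereal"
  assumes "(L \<longlongrightarrow> \<infinity>) at_infinity"
  shows "bounded {p. L p \<le> ereal c}"
proof -
  obtain b where "\<And>p. b \<le> norm p \<Longrightarrow> ereal c < L p"
    using assms unfolding tendsto_PInfty eventually_at_infinity by blast
  then have "\<forall>p\<in>{p. L p \<le> ereal c}. norm p \<le> b"
    by (meson linorder_not_le mem_Collect_eq nless_le)
  then show ?thesis
    unfolding bounded_iff by blast
qed

lemma cluster_points_iff:
  fixes z :: "nat \<Rightarrow> 'v::metric_space"
  shows "l \<in> cluster_points z \<longleftrightarrow> (\<forall>e>0. \<exists>\<^sub>F k in sequentially. dist (z k) l < e)"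
  unfolding frequently_sequentially
proof
  assume "l \<in> cluster_points z"
  then obtain r where r: "strict_mono r" "(z \<circ> r) \<longlonglongrightarrow> l"
    unfolding cluster_points_def by blast
  show "\<forall>e>0. \<forall>N. \<exists>k\<ge>N. dist (z k) l < e"
  proof (intro allI impI)
    fix e :: real and N assume "e > 0"
    with r(2) obtain M where M: "\<And>n. n \<ge> M \<Longrightarrow> dist (z (r n)) l < e"
      unfolding lim_sequentially by auto
    have "N \<le> r (max M N)"
      using seq_suble[OF r(1), of "max M N"] by simp
    with M[of "max M N"] show "\<exists>k\<ge>N. dist (z k) l < e"
      by auto
  qed
next
  assume approach: "\<forall>e>0. \<forall>N. \<exists>k\<ge>N. dist (z k) l < e"
  have pos: "inverse (real (Suc n)) > 0" for n
    by simp
  have "\<exists>r. \<forall>n. dist (z (r n)) l < inverse (real (Suc n)) \<and> r n < r (Suc n)"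
  proof (rule dependent_nat_choice)
    show "\<exists>k. dist (z k) l < inverse (real (Suc 0))"
      using approach pos by blast
    show "\<exists>k'. dist (z k') l < inverse (real (Suc (Suc n))) \<and> k < k'" for n k
      using approach[rule_format, OF pos, of "Suc k" "Suc n"] by (auto simp del: of_nat_Suc)
  qed
  then obtain r where r: "\<And>n. dist (z (r n)) l < inverse (real (Suc n))" "\<And>n. r n < r (Suc n)"
    by blast
  have "(\<lambda>n. dist (z (r n)) l) \<longlonglongrightarrow> 0"
    by (rule tendsto_sandwich[OF _ _ tendsto_const LIMSEQ_inverse_real_of_nat])
      (use r(1) in \<open>auto intro!: always_eventually less_imp_le\<close>)
  then have "(z \<circ> r) \<longlonglongrightarrow> l"
    unfolding o_def by (rule tendsto_dist_iff[THEN iffD2])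
  with r(2) show "l \<in> cluster_points z"
    unfolding cluster_points_def by (auto simp: strict_mono_Suc_iff)
qed

lemma cluster_points_Suc:
  fixes z :: "nat \<Rightarrow> 'v::metric_space"
  shows "cluster_points (\<lambda>k. z (Suc k)) = cluster_points z"
  unfolding set_eq_iff cluster_points_iff frequently_sequentially
  by (metis Suc_le_D Suc_le_mono le_SucI)

lemma cluster_points_eq_Inter_closure:
  fixes z :: "nat \<Rightarrow> 'v::metric_space"
  shows "cluster_points z = (\<Inter>N. closure (z ` {N..}))"
  by (force simp: cluster_points_iff frequently_sequentially closure_approachable)

lemma closed_cluster_points:
  fixes z :: "nat \<Rightarrow> 'v::metric_space"
  shows "closed (cluster_points z)"
  by (simp add: cluster_points_eq_Inter_closure closed_INT)

lemma compact_cluster_points: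
  fixes z :: "nat \<Rightarrow> 'v::heine_borel"
  assumes "bounded (range z)"
  shows "compact (cluster_points z)"
proof -
  have "cluster_points z \<subseteq> closure (z ` {0..})"
    unfolding cluster_points_eq_Inter_closure by blast
  then have "bounded (cluster_points z)"
    using assms by (metis atLeast_0 bounded_closure bounded_subset)
  then show ?thesis
    by (simp add: compact_eq_bounded_closed closed_cluster_points)
qed

lemma cluster_points_nonempty:
  fixes z :: "nat \<Rightarrow> 'v::heine_borel"
  assumes "bounded (range z)"
  shows "cluster_points z \<noteq> {}"
  using bounded_imp_convergent_subsequence[OF assms] unfolding cluster_points_def by blast

lemma infdist_cluster_points_tendsto_0:
  fixes z :: "nat \<Rightarrow> 'v::heine_borel"
  assumes bdd: "bounded (range z)"
  shows "(\<lambda>k. infdist (z k) (cluster_points z)) \<longlonglongrightarrow> 0"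
proof (rule ccontr)
  let ?C = "cluster_points z"
  assume "\<not> ?thesis"
  then obtain e :: real where e: "e > 0" and far: "\<exists>\<^sub>F k in sequentially. e \<le> infdist (z k) ?C"
    unfolding lim_sequentially frequently_sequentially by (auto simp: not_less infdist_nonneg)
  then have "infinite {k. e \<le> infdist (z k) ?C}"
    by (simp add: frequently_sequentially infinite_nat_iff_unbounded_le)
  then obtain r :: "nat \<Rightarrow> nat" where r: "strict_mono r" "\<And>n. e \<le> infdist (z (r n)) ?C"
    using infinite_enumerate by blast
  have "bounded (range (z \<circ> r))"
    using bdd by (rule bounded_subset) auto
  then obtain l s where s: "strict_mono s" "(z \<circ> (r \<circ> s)) \<longlonglongrightarrow> l"
    using bounded_imp_convergent_subsequence by (metis comp_assoc)
  then have "l \<in> ?C"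
    using strict_mono_o[OF r(1) s(1)] unfolding cluster_points_def by blast
  obtain n where "dist (z (r (s n))) l < e"
    using s(2) e unfolding lim_sequentially by fastforce
  moreover have "infdist (z (r (s n))) ?C \<le> dist (z (r (s n))) l"
    using \<open>l \<in> ?C\<close> by (rule infdist_le)
  ultimately show False
    using r(2)[of "s n"] by simp
qed

text \<open>The inertial extrapolation of the algorithm enters the argument only through its safeguard
  \<open>step_hat\<close>: the accepted point \<open>(xh k, yh k)\<close> never has a larger value of \<open>L\<close> than
  \<open>(x k, y k)\<close>.\<close>
locale inertial_bregman_palm =
  fixes f :: "'a::euclidean_space \<Rightarrow> real" and g :: "'b::euclidean_space \<Rightarrow> real"
    and Q :: "'a \<times> 'b \<Rightarrow> ereal" and L :: "'a \<times> 'b \<Rightarrow> ereal"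
    and df :: "'a \<Rightarrow> 'a" and dg :: "'b \<Rightarrow> 'b" and Lf Lg :: real
    and phi1 :: "'a \<Rightarrow> real" and dphi1 :: "'a \<Rightarrow> 'a"
    and phi2 :: "'b \<Rightarrow> real" and dphi2 :: "'b \<Rightarrow> 'b"
    and theta1 theta2 :: real
    and q :: "'a \<times> 'b \<Rightarrow> real" and h :: "'a \<Rightarrow> ereal"
    and x xh :: "nat \<Rightarrow> 'a" and y yh :: "nat \<Rightarrow> 'b"
  assumes L_def: "\<And>u v. L (u, v) = ereal (f u) + Q (u, v) + ereal (g v)"
    and L_bdd_below: "\<exists>c::real. \<forall>z. ereal c \<le> L z"
    and f_grad: "\<And>u. (f has_derivative (\<lambda>d. inner (df u) d)) (at u)"
    and g_grad: "\<And>v. (g has_derivative (\<lambda>d. inner (dg v) d)) (at v)"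
    and df_lip: "lipschitz_on Lf UNIV df"
    and dg_lip: "lipschitz_on Lg UNIV dg"
    and Q_proper: "proper_fun Q"
    and phi1_grad: "\<And>u. (phi1 has_derivative (\<lambda>d. inner (dphi1 u) d)) (at u)"
    and phi2_grad: "\<And>v. (phi2 has_derivative (\<lambda>d. inner (dphi2 v) d)) (at v)"
    and phi1_sc: "strongly_convex theta1 phi1" and phi2_sc: "strongly_convex theta2 phi2"
    and theta1_gt: "theta1 > Lf" and theta2_gt: "theta2 > Lg"
    and dphi1_cont: "continuous_on UNIV dphi1"
    and dphi2_cont: "continuous_on UNIV dphi2"
    and L_coercive: "(L \<longlongrightarrow> \<infinity>) at_infinity"
    and domQ_closed: "closed (edom Q)"
    and partial_subdiff: "\<And>u v. (u, v) \<in> edom Q \<Longrightarrow>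
          lim_subdiff (\<lambda>s. Q (s, v)) u \<times> lim_subdiff (\<lambda>t. Q (u, t)) v \<subseteq> lim_subdiff Q (u, v)"
    and Q_split: "\<And>u v. Q (u, v) = ereal (q (u, v)) + h u"
    and h_real_ext: "\<And>u. h u \<noteq> -\<infinity>"
    and h_cont: "continuous_on (edom h) h"
    and q_cont: "continuous_on (edom Q) q"
    and step_x: "\<And>k u. Q (x (Suc k), yh k) + ereal (inner (df (xh k)) (x (Suc k)))
                          + ereal (bregman phi1 dphi1 (x (Suc k)) (xh k))
                        \<le> Q (u, yh k) + ereal (inner (df (xh k)) u) + ereal (bregman phi1 dphi1 u (xh k))"
    and step_y: "\<And>k v. Q (x (Suc k), y (Suc k)) + ereal (inner (dg (yh k)) (y (Suc k)))
                          + ereal (bregman phi2 dphi2 (y (Suc k)) (yh k))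
                        \<le> Q (x (Suc k), v) + ereal (inner (dg (yh k)) v) + ereal (bregman phi2 dphi2 v (yh k))"
    and step_hat: "\<And>k. L (xh (Suc k), yh (Suc k)) \<le> L (x (Suc k), y (Suc k))"
begin

lemma edom_Q_iff: "(u, v) \<in> edom Q \<longleftrightarrow> u \<in> edom h"
  using Q_split[of u v] h_real_ext[of u] by (cases "h u") (auto simp: edom_def)

text \<open>Since \<open>real_of_ereal \<infinity> = 0\<close>, \<open>Qr\<close> and \<open>Lr\<close> agree with \<open>Q\<close> and \<open>L\<close> only on
  \<open>edom Q\<close>.\<close>
definition Qr :: "'a \<times> 'b \<Rightarrow> real" where
  "Qr p = real_of_ereal (Q p)"

definition Lr :: "'a \<times> 'b \<Rightarrow> real" where
  "Lr p = f (fst p) + Qr p + g (snd p)"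

lemma Q_eq_Qr:
  assumes "p \<in> edom Q"
  shows "Q p = ereal (Qr p)"
proof -
  have "Q p \<noteq> -\<infinity>"
    using Q_proper unfolding proper_fun_def by blast
  with assms show ?thesis
    unfolding Qr_def edom_def by (cases "Q p") auto
qed

lemma L_eq_Lr: "p \<in> edom Q \<Longrightarrow> L p = ereal (Lr p)"
  using L_def[of "fst p" "snd p"] Q_eq_Qr[of p] by (simp add: Lr_def)

lemma continuous_on_Qr: "continuous_on (edom Q) Qr"
proof -
  have "continuous_on (edom h) (\<lambda>u. real_of_ereal (h u))"
    using h_cont h_real_ext continuous_on_iff_real[of "edom h" h] by (force simp: edom_def o_def)
  then have "continuous_on (edom Q) (\<lambda>p. real_of_ereal (h (fst p)))"
    by (rule continuous_on_compose2[OF _ continuous_on_fst[OF continuous_on_id]])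
      (force simp: edom_Q_iff)
  then have "continuous_on (edom Q) (\<lambda>p. q p + real_of_ereal (h (fst p)))"
    by (intro continuous_on_add q_cont)
  moreover have "q p + real_of_ereal (h (fst p)) = Qr p" if "p \<in> edom Q" for p
    using that Q_split[of "fst p" "snd p"] h_real_ext[of "fst p"] edom_Q_iff[of "fst p" "snd p"]
    by (cases "h (fst p)") (auto simp: Qr_def edom_def)
  ultimately show ?thesis
    by (rule continuous_on_eq)
qed

lemma smooth_data_continuous:
  shows "continuous_on UNIV f" "continuous_on UNIV g" "continuous_on UNIV df" "continuous_on UNIV dg"
    and "continuous_on UNIV phi1" "continuous_on UNIV phi2"
proof -
  show "continuous_on UNIV f" "continuous_on UNIV g" "continuous_on UNIV phi1" "continuous_on UNIV phi2"
    by (rule has_derivative_continuous_on, rule f_grad, rule has_derivative_continuous_on, rule g_grad,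
        rule has_derivative_continuous_on, rule phi1_grad, rule has_derivative_continuous_on, rule phi2_grad)
  show "continuous_on UNIV df" "continuous_on UNIV dg"
    using df_lip dg_lip by (auto intro: lipschitz_on_continuous_on)
qed

lemma continuous_on_Lr: "continuous_on (edom Q) Lr"
  using smooth_data_continuous(1,2) unfolding Lr_def
  by (intro continuous_on_add continuous_on_Qr continuous_on_compose2[OF _ continuous_on_fst]
      continuous_on_compose2[OF _ continuous_on_snd] continuous_on_id) auto

lemma tendsto_Qr:
  assumes "P \<longlonglongrightarrow> p" "\<And>j. P j \<in> edom Q" "p \<in> edom Q"
  shows "(\<lambda>j. Qr (P j)) \<longlonglongrightarrow> Qr p"
  using assms by (intro continuous_on_tendsto_compose[OF continuous_on_Qr]) (auto intro: always_eventually)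

lemma x_in_edom_h: "x (Suc k) \<in> edom h"
proof (rule ccontr)
  obtain u v where "(u, v) \<in> edom Q"
    using Q_proper by (auto simp: proper_fun_def edom_def)
  then have "(u, yh k) \<in> edom Q"
    by (simp add: edom_Q_iff)
  moreover assume "x (Suc k) \<notin> edom h"
  then have "Q (x (Suc k), yh k) = \<infinity>"
    using edom_Q_iff by (auto simp: edom_def)
  ultimately show False
    using step_x[of k u] Q_eq_Qr by simp
qed

lemma xh_in_edom_h: "xh (Suc k) \<in> edom h"
proof (rule ccontr)
  assume "xh (Suc k) \<notin> edom h"
  then have "L (xh (Suc k), yh (Suc k)) = \<infinity>"
    using edom_Q_iff by (auto simp: edom_def L_def)
  with step_hat[of k] show False
    using L_eq_Lr x_in_edom_h edom_Q_iff by auto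
qed

definition descent_const :: real where
  "descent_const = min ((theta1 - Lf) / 2) ((theta2 - Lg) / 2)"

lemma descent_const_pos: "descent_const > 0"
  using theta1_gt theta2_gt by (simp add: descent_const_def)

lemma sufficient_decrease:
  "Lr (x (Suc (Suc k)), y (Suc (Suc k)))
     + descent_const * (norm ((x (Suc (Suc k)), y (Suc (Suc k))) - (xh (Suc k), yh (Suc k))))\<^sup>2
   \<le> Lr (x (Suc k), y (Suc k))"
proof -
  let ?x = "x (Suc (Suc k))" and ?y = "y (Suc (Suc k))"
  let ?u = "xh (Suc k)" and ?v = "yh (Suc k)"
  have in_dom: "(?x, t) \<in> edom Q" "(?u, t) \<in> edom Q" for t
    using x_in_edom_h xh_in_edom_h by (simp_all add: edom_Q_iff)
  have x_step: "f ?x + Qr (?x, ?v) + (theta1 - Lf) / 2 * (norm (?x - ?u))\<^sup>2 \<le> f ?u + Qr (?u, ?v)"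
  proof (rule bregman_prox_grad_decrease[OF f_grad df_lip phi1_grad phi1_sc])
    show "Qr (?x, ?v) + inner (df ?u) ?x + bregman phi1 dphi1 ?x ?u \<le> Qr (?u, ?v) + inner (df ?u) ?u"
      using step_x[of "Suc k" ?u] by (simp add: Q_eq_Qr in_dom bregman_def)
  qed
  have y_step: "g ?y + Qr (?x, ?y) + (theta2 - Lg) / 2 * (norm (?y - ?v))\<^sup>2 \<le> g ?v + Qr (?x, ?v)"
  proof (rule bregman_prox_grad_decrease[OF g_grad dg_lip phi2_grad phi2_sc])
    show "Qr (?x, ?y) + inner (dg ?v) ?y + bregman phi2 dphi2 ?y ?v \<le> Qr (?x, ?v) + inner (dg ?v) ?v"
      using step_y[of "Suc k" ?v] by (simp add: Q_eq_Qr in_dom bregman_def)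
  qed
  have "Lr (?u, ?v) \<le> Lr (x (Suc k), y (Suc k))"
    using step_hat[of k] x_in_edom_h xh_in_edom_h by (simp add: L_eq_Lr edom_Q_iff)
  moreover have "descent_const * (norm ((?x, ?y) - (?u, ?v)))\<^sup>2
      = descent_const * (norm (?x - ?u))\<^sup>2 + descent_const * (norm (?y - ?v))\<^sup>2"
    by (simp add: norm_Pair distrib_left)
  moreover have "\<dots> \<le> (theta1 - Lf) / 2 * (norm (?x - ?u))\<^sup>2 + (theta2 - Lg) / 2 * (norm (?y - ?v))\<^sup>2"
    by (intro add_mono mult_right_mono) (auto simp: descent_const_def min_def)
  ultimately show ?thesis
    using x_step y_step by (simp add: Lr_def)
qed

lemma value_decseq: "decseq (\<lambda>k. Lr (x (Suc k), y (Suc k)))"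
  and value_convergent: "convergent (\<lambda>k. Lr (x (Suc k), y (Suc k)))"
  and step_tendsto_0: "(\<lambda>k. (x (Suc k), y (Suc k)) - (xh k, yh k)) \<longlonglongrightarrow> 0"
proof -
  obtain c :: real where c: "\<And>p. ereal c \<le> L p"
    using L_bdd_below by blast
  have "c \<le> Lr (x (Suc k), y (Suc k))" for k
    using c[of "(x (Suc k), y (Suc k))"] x_in_edom_h by (simp add: L_eq_Lr edom_Q_iff)
  note descent = descent_sequence_convergence[where w="\<lambda>k. Lr (x (Suc k), y (Suc k))"
      and e="\<lambda>k. (x (Suc (Suc k)), y (Suc (Suc k))) - (xh (Suc k), yh (Suc k))",
      OF descent_const_pos sufficient_decrease this]
  show "decseq (\<lambda>k. Lr (x (Suc k), y (Suc k)))" "convergent (\<lambda>k. Lr (x (Suc k), y (Suc k)))"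
    by (rule descent(1), rule descent(2))
  show "(\<lambda>k. (x (Suc k), y (Suc k)) - (xh k, yh k)) \<longlonglongrightarrow> 0"
    by (rule LIMSEQ_imp_Suc) (rule descent(3))
qed

lemma bounded_iterates: "bounded (range (\<lambda>k. (x k, y k)))"
proof -
  let ?S = "{p. L p \<le> ereal (Lr (x 1, y 1))}"
  have "L (x (Suc j), y (Suc j)) \<le> ereal (Lr (x 1, y 1))" for j
    using decseqD[OF value_decseq, of 0 j] x_in_edom_h by (simp add: L_eq_Lr edom_Q_iff)
  then have "(x k, y k) \<in> insert (x 0, y 0) ?S" for k
    by (cases k) auto
  then have "range (\<lambda>k. (x k, y k)) \<subseteq> insert (x 0, y 0) ?S"
    by blast
  moreover have "bounded (insert (x 0, y 0) ?S)"
    using bounded_sublevel_if_coercive[OF L_coercive] by simp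
  ultimately show ?thesis
    by (rule bounded_subset[rotated])
qed

lemma cluster_point_subseq:
  assumes "(u, v) \<in> cluster_points (\<lambda>k. (x k, y k))"
  obtains r where "strict_mono r"
    "(\<lambda>j. x (Suc (r j))) \<longlonglongrightarrow> u" "(\<lambda>j. y (Suc (r j))) \<longlonglongrightarrow> v"
    "(\<lambda>j. xh (r j)) \<longlonglongrightarrow> u" "(\<lambda>j. yh (r j)) \<longlonglongrightarrow> v"
proof -
  have "(u, v) \<in> cluster_points (\<lambda>k. (x (Suc k), y (Suc k)))"
    using assms cluster_points_Suc[of "\<lambda>k. (x k, y k)"] by simp
  then obtain r where r: "strict_mono r"
    and "((\<lambda>k. (x (Suc k), y (Suc k))) \<circ> r) \<longlonglongrightarrow> (u, v)"
    unfolding cluster_points_def by blast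
  then have z: "(\<lambda>j. (x (Suc (r j)), y (Suc (r j)))) \<longlonglongrightarrow> (u, v)"
    by (simp add: o_def)
  have "(\<lambda>j. (x (Suc (r j)), y (Suc (r j))) - (xh (r j), yh (r j))) \<longlonglongrightarrow> 0"
    using LIMSEQ_subseq_LIMSEQ[OF step_tendsto_0 r] by (simp add: o_def)
  from tendsto_diff[OF z this] have zh: "(\<lambda>j. (xh (r j), yh (r j))) \<longlonglongrightarrow> (u, v)"
    by simp
  show thesis
    by (rule that[OF r]) (use tendsto_fst[OF z] tendsto_snd[OF z] tendsto_fst[OF zh] tendsto_snd[OF zh] in simp_all)
qed

lemma cluster_point_in_edom:
  assumes "(u, v) \<in> cluster_points (\<lambda>k. (x k, y k))"
  shows "u \<in> edom h"
proof -
  obtain r where X: "(\<lambda>j. x (Suc (r j))) \<longlonglongrightarrow> u" and Y: "(\<lambda>j. y (Suc (r j))) \<longlonglongrightarrow> v"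
    using cluster_point_subseq[OF assms] by blast
  have "(x (Suc (r j)), y (Suc (r j))) \<in> edom Q" for j
    using x_in_edom_h by (simp add: edom_Q_iff)
  from this tendsto_Pair[OF X Y] have "(u, v) \<in> edom Q"
    by (rule closed_sequentially[OF domQ_closed])
  then show ?thesis
    by (simp add: edom_Q_iff)
qed

lemma L_cluster_point:
  assumes "p \<in> cluster_points (\<lambda>k. (x k, y k))"
  shows "L p = ereal (lim (\<lambda>k. Lr (x (Suc k), y (Suc k))))"
proof -
  obtain u v where p: "p = (u, v)"
    by fastforce
  have uv: "(u, v) \<in> cluster_points (\<lambda>k. (x k, y k))"
    using assms p by simp
  obtain r where r: "strict_mono r"
    and X: "(\<lambda>j. x (Suc (r j))) \<longlonglongrightarrow> u" and Y: "(\<lambda>j. y (Suc (r j))) \<longlonglongrightarrow> v"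
    using cluster_point_subseq[OF uv] by blast
  have u: "u \<in> edom h"
    by (rule cluster_point_in_edom[OF uv])
  have "(\<lambda>j. Lr (x (Suc (r j)), y (Suc (r j)))) \<longlonglongrightarrow> Lr (u, v)"
    using u x_in_edom_h
    by (intro continuous_on_tendsto_compose[OF continuous_on_Lr tendsto_Pair[OF X Y]])
      (auto simp: edom_Q_iff)
  moreover have "(\<lambda>j. Lr (x (Suc (r j)), y (Suc (r j)))) \<longlonglongrightarrow> lim (\<lambda>k. Lr (x (Suc k), y (Suc k)))"
    using LIMSEQ_subseq_LIMSEQ[OF value_convergent[unfolded convergent_LIMSEQ_iff] r]
    by (simp add: o_def)
  ultimately have "Lr (u, v) = lim (\<lambda>k. Lr (x (Suc k), y (Suc k)))"
    by (rule LIMSEQ_unique)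
  then show ?thesis
    using u p by (simp add: L_eq_Lr edom_Q_iff)
qed

lemma x_limit_min:
  assumes "(u, v) \<in> cluster_points (\<lambda>k. (x k, y k))" and "s \<in> edom h"
  shows "Qr (u, v) + inner (df u) u \<le> Qr (s, v) + inner (df u) s + bregman phi1 dphi1 s u"
proof -
  obtain r where X: "(\<lambda>j. x (Suc (r j))) \<longlonglongrightarrow> u"
    and XH: "(\<lambda>j. xh (r j)) \<longlonglongrightarrow> u" and YH: "(\<lambda>j. yh (r j)) \<longlonglongrightarrow> v"
    using cluster_point_subseq[OF assms(1)] by blast
  have u: "u \<in> edom h"
    by (rule cluster_point_in_edom[OF assms(1)])
  show ?thesis
  proof (rule bregman_step_limit[OF _ _ _ X XH smooth_data_continuous(5) dphi1_cont
        smooth_data_continuous(3)])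
    show "Qr (x (Suc (r j)), yh (r j)) + inner (df (xh (r j))) (x (Suc (r j)))
          + bregman phi1 dphi1 (x (Suc (r j))) (xh (r j))
        \<le> Qr (s, yh (r j)) + inner (df (xh (r j))) s + bregman phi1 dphi1 s (xh (r j))" for j
      using step_x[of "r j" s] x_in_edom_h assms(2) by (simp add: Q_eq_Qr edom_Q_iff)
    show "(\<lambda>j. Qr (x (Suc (r j)), yh (r j))) \<longlonglongrightarrow> Qr (u, v)"
      using u x_in_edom_h by (intro tendsto_Qr[OF tendsto_Pair[OF X YH]]) (auto simp: edom_Q_iff)
    show "(\<lambda>j. Qr (s, yh (r j))) \<longlonglongrightarrow> Qr (s, v)"
      using assms(2) by (intro tendsto_Qr[OF tendsto_Pair[OF tendsto_const YH]]) (auto simp: edom_Q_iff)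
  qed
qed

lemma y_limit_min:
  assumes "(u, v) \<in> cluster_points (\<lambda>k. (x k, y k))"
  shows "Qr (u, v) + inner (dg v) v \<le> Qr (u, t) + inner (dg v) t + bregman phi2 dphi2 t v"
proof -
  obtain r where X: "(\<lambda>j. x (Suc (r j))) \<longlonglongrightarrow> u" and Y: "(\<lambda>j. y (Suc (r j))) \<longlonglongrightarrow> v"
    and YH: "(\<lambda>j. yh (r j)) \<longlonglongrightarrow> v"
    using cluster_point_subseq[OF assms(1)] by blast
  have u: "u \<in> edom h"
    by (rule cluster_point_in_edom[OF assms(1)])
  show ?thesis
  proof (rule bregman_step_limit[OF _ _ _ Y YH smooth_data_continuous(6) dphi2_cont
        smooth_data_continuous(4)])
    show "Qr (x (Suc (r j)), y (Suc (r j))) + inner (dg (yh (r j))) (y (Suc (r j)))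
          + bregman phi2 dphi2 (y (Suc (r j))) (yh (r j))
        \<le> Qr (x (Suc (r j)), t) + inner (dg (yh (r j))) t + bregman phi2 dphi2 t (yh (r j))" for j
      using step_y[of "r j" t] x_in_edom_h by (simp add: Q_eq_Qr edom_Q_iff)
    show "(\<lambda>j. Qr (x (Suc (r j)), y (Suc (r j)))) \<longlonglongrightarrow> Qr (u, v)"
      using u x_in_edom_h by (intro tendsto_Qr[OF tendsto_Pair[OF X Y]]) (auto simp: edom_Q_iff)
    show "(\<lambda>j. Qr (x (Suc (r j)), t)) \<longlonglongrightarrow> Qr (u, t)"
      using u x_in_edom_h by (intro tendsto_Qr[OF tendsto_Pair[OF X tendsto_const]]) (auto simp: edom_Q_iff)
  qed
qed

lemma cluster_point_critical:
  assumes "p \<in> cluster_points (\<lambda>k. (x k, y k))"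
  shows "p \<in> crit L"
proof -
  obtain u v where p: "p = (u, v)"
    by fastforce
  have uv: "(u, v) \<in> cluster_points (\<lambda>k. (x k, y k))"
    using assms p by simp
  have u: "u \<in> edom h"
    by (rule cluster_point_in_edom[OF uv])
  have "- df u \<in> frechet_subdiff (\<lambda>s. Q (s, v)) u"
  proof (rule frechet_subdiff_of_bregman_min[OF phi1_grad])
    show "\<bar>Q (u, v)\<bar> \<noteq> \<infinity>" "Q (s, v) \<noteq> -\<infinity>" for s
      using u Q_eq_Qr[of "(s, v)"] Q_proper by (auto simp: Q_eq_Qr edom_Q_iff proper_fun_def)
    show "real_of_ereal (Q (u, v)) + inner (df u) u
        \<le> real_of_ereal (Q (s, v)) + inner (df u) s + bregman phi1 dphi1 s u" if "Q (s, v) \<noteq> \<infinity>" for s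
    proof -
      have "s \<in> edom h"
        using that edom_Q_iff[of s v] by (simp add: edom_def less_top)
      then show ?thesis
        using x_limit_min[OF uv] by (simp add: Qr_def)
    qed
  qed
  moreover have "- dg v \<in> frechet_subdiff (\<lambda>t. Q (u, t)) v"
  proof (rule frechet_subdiff_of_bregman_min[OF phi2_grad])
    show "\<bar>Q (u, v)\<bar> \<noteq> \<infinity>" "Q (u, t) \<noteq> -\<infinity>" for t
      using u Q_proper by (auto simp: Q_eq_Qr edom_Q_iff proper_fun_def)
    show "real_of_ereal (Q (u, v)) + inner (dg v) v
        \<le> real_of_ereal (Q (u, t)) + inner (dg v) t + bregman phi2 dphi2 t v" for t
      using y_limit_min[OF uv, of t] by (simp add: Qr_def)
  qed
  moreover have "(u, v) \<in> edom Q"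
    using u by (simp add: edom_Q_iff)
  ultimately have Q_subdiff: "(- df u, - dg v) \<in> lim_subdiff Q (u, v)"
    using partial_subdiff[of u v] frechet_subdiff_subset_lim_subdiff[of "\<lambda>s. Q (s, v)" u]
      frechet_subdiff_subset_lim_subdiff[of "\<lambda>t. Q (u, t)" v] by blast
  have L_split: "L z = Q z + ereal (f (fst z) + g (snd z))" for z
    using L_def[of "fst z" "snd z"] by (simp add: ac_simps)
  have grad_cont: "continuous_on UNIV (\<lambda>z::'a \<times> 'b. (df (fst z), dg (snd z)))"
    using continuous_on_compose2[OF smooth_data_continuous(3) continuous_on_fst[OF continuous_on_id]]
      continuous_on_compose2[OF smooth_data_continuous(4) continuous_on_snd[OF continuous_on_id]]
    by (intro continuous_on_Pair) simp_all
  have "(- df u, - dg v) + (df (fst (u, v)), dg (snd (u, v))) \<in> lim_subdiff L (u, v)"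
    by (rule lim_subdiff_add_C1[OF has_derivative_separable_sum[OF f_grad g_grad] grad_cont L_split
          _ Q_subdiff])
      (use u in \<open>simp add: Q_eq_Qr edom_Q_iff\<close>)
  then show ?thesis
    by (simp add: p crit_def zero_prod_def)
qed

end

theorem lemma3p3:
  fixes f :: "'a::euclidean_space \<Rightarrow> real" and g :: "'b::euclidean_space \<Rightarrow> real"
    and Q :: "'a \<times> 'b \<Rightarrow> ereal" and L :: "'a \<times> 'b \<Rightarrow> ereal"
    and df :: "'a \<Rightarrow> 'a" and dg :: "'b \<Rightarrow> 'b"
    and Lf Lg :: real
    and phi1 :: "'a \<Rightarrow> real" and dphi1 :: "'a \<Rightarrow> 'a"
    and phi2 :: "'b \<Rightarrow> real" and dphi2 :: "'b \<Rightarrow> 'b"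
    and theta1 theta2 eta1 eta2 :: real
    and q :: "'a \<times> 'b \<Rightarrow> real" and dxq :: "'a \<times> 'b \<Rightarrow> 'a" and h :: "'a \<Rightarrow> ereal"
    and x xh :: "nat \<Rightarrow> 'a" and y yh :: "nat \<Rightarrow> 'b"
    and xm1 :: 'a and ym1 :: 'b
    and alpha beta :: "nat \<Rightarrow> real" and amax bmax :: real
  assumes L_def: "\<And>u v. L (u, v) = ereal (f u) + Q (u, v) + ereal (g v)"
    \<comment> \<open>(A1)\<close>
    and L_bdd_below: "\<exists>c::real. \<forall>z. ereal c \<le> L z"
    and f_grad: "\<And>u. (f has_derivative (\<lambda>d. inner (df u) d)) (at u)"
    and g_grad: "\<And>v. (g has_derivative (\<lambda>d. inner (dg v) d)) (at v)"
    and df_lip: "lipschitz_on Lf UNIV df"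
    and dg_lip: "lipschitz_on Lg UNIV dg"
    and Q_proper: "proper_fun Q" and Q_lsc: "lsc_fun Q"
    and phi1_grad: "\<And>u. (phi1 has_derivative (\<lambda>d. inner (dphi1 u) d)) (at u)"
    and phi2_grad: "\<And>v. (phi2 has_derivative (\<lambda>d. inner (dphi2 v) d)) (at v)"
    and phi1_sc: "strongly_convex theta1 phi1" and phi2_sc: "strongly_convex theta2 phi2"
    and theta1_gt: "theta1 > Lf" and theta2_gt: "theta2 > Lg"
    and dphi1_lip: "lipschitz_on eta1 UNIV dphi1"
    and dphi2_lip: "lipschitz_on eta2 UNIV dphi2"
    \<comment> \<open>(A2)\<close>
    and L_coercive: "(L \<longlongrightarrow> \<infinity>) at_infinity"
    and domQ_closed: "closed (edom Q)"
    and partial_subdiff: "\<And>u v. (u, v) \<in> edom Q \<Longrightarrow>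
          lim_subdiff (\<lambda>s. Q (s, v)) u \<times> lim_subdiff (\<lambda>t. Q (u, t)) v \<subseteq> lim_subdiff Q (u, v)"
    and Q_split: "\<And>u v. Q (u, v) = ereal (q (u, v)) + h u"
    and h_real_ext: "\<And>u. h u \<noteq> -\<infinity>"
    and h_cont: "continuous_on (edom h) h"
    and q_cont: "continuous_on (edom Q) q"
    and q_grad: "\<And>u v. ((\<lambda>s. q (s, v)) has_derivative (\<lambda>d. inner (dxq (u, v)) d)) (at u)"
    and q_grad_cont: "\<And>v. continuous_on UNIV (\<lambda>s. dxq (s, v))"
    and q_grad_lip: "\<And>D1 D2. bounded D1 \<Longrightarrow> bounded D2 \<Longrightarrow> D1 \<times> D2 \<subseteq> edom Q \<Longrightarrow>
          \<exists>\<xi>>0. \<forall>xb\<in>D1. \<forall>v\<in>D2. \<forall>vb\<in>D2.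
             norm (dxq (xb, v) - dxq (xb, vb)) \<le> \<xi> * norm (v - vb)"
    \<comment> \<open>algorithm parameters\<close>
    and amax_nn: "amax \<ge> 0" and bmax_nn: "bmax \<ge> 0" and ab_lt1: "amax + bmax < 1"
    and alpha_rng: "\<And>k. 0 \<le> alpha k \<and> alpha k \<le> amax"
    and beta_rng: "\<And>k. 0 \<le> beta k \<and> beta k \<le> bmax"
    \<comment> \<open>the iteration\<close>
    and init: "xh 0 = x 0" "yh 0 = y 0"
    and step_x: "\<And>k u. Q (x (Suc k), yh k) + ereal (inner (df (xh k)) (x (Suc k)))
                          + ereal (bregman phi1 dphi1 (x (Suc k)) (xh k))
                        \<le> Q (u, yh k) + ereal (inner (df (xh k)) u) + ereal (bregman phi1 dphi1 u (xh k))"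
    and step_y: "\<And>k v. Q (x (Suc k), y (Suc k)) + ereal (inner (dg (yh k)) (y (Suc k)))
                          + ereal (bregman phi2 dphi2 (y (Suc k)) (yh k))
                        \<le> Q (x (Suc k), v) + ereal (inner (dg (yh k)) v) + ereal (bregman phi2 dphi2 v (yh k))"
    and step_hat: "\<And>k.
          let xp = (if k = 0 then xm1 else x (k - 1));
              yp = (if k = 0 then ym1 else y (k - 1));
              u = x (Suc k) + alpha k *\<^sub>R (x (Suc k) - x k) + beta k *\<^sub>R (x k - xp);
              v = y (Suc k) + alpha k *\<^sub>R (y (Suc k) - y k) + beta k *\<^sub>R (y k - yp)
          in (xh (Suc k), yh (Suc k)) =
               (if L (u, v) \<le> L (x (Suc k), y (Suc k)) then (u, v) else (x (Suc k), y (Suc k)))"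
  shows "cluster_points (\<lambda>k. (x k, y k)) \<noteq> {}
       \<and> compact (cluster_points (\<lambda>k. (x k, y k)))
       \<and> (\<exists>c::real. \<forall>z\<in>cluster_points (\<lambda>k. (x k, y k)). L z = ereal c)
       \<and> cluster_points (\<lambda>k. (x k, y k)) \<subseteq> crit L
       \<and> (\<lambda>k. infdist (x k, y k) (cluster_points (\<lambda>k. (x k, y k)))) \<longlonglongrightarrow> 0"
proof -
  interpret inertial_bregman_palm f g Q L df dg Lf Lg phi1 dphi1 phi2 dphi2 theta1 theta2 q h x xh y yh
  proof
    show "continuous_on UNIV dphi1" "continuous_on UNIV dphi2"
      using dphi1_lip dphi2_lip by (auto intro: lipschitz_on_continuous_on)
    show "L (xh (Suc k), yh (Suc k)) \<le> L (x (Suc k), y (Suc k))" for k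
      using step_hat[of k] by (auto simp: Let_def)
  qed (fact assms)+
  show ?thesis
    using cluster_points_nonempty[OF bounded_iterates] compact_cluster_points[OF bounded_iterates]
      L_cluster_point cluster_point_critical infdist_cluster_points_tendsto_0[OF bounded_iterates]
    by blast
qed

end
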